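(* If $r$ is a nonnegative integer and $m$ is an integer satisfying $2m+r\ge0$, then $$2^r\binom{m+r}{r}=\sum_{i=0}^{\lfloor r/2\rfloor}(-1)^i\binom{2m+2r-2i}{r-2i}\binom{m+r}{i}.$$ *)

theory Defs
  imports Complex_Main
begin

end

theory Submission
  imports Defs "HOL-Computational_Algebra.Polynomial"
begin

text \<open>
  Compare the coefficients of \<open>x\<^sup>r\<close> on both sides of
  \<open>(1 + 2x)\<^sup>n = ((1 + x)\<^sup>2 - x\<^sup>2)\<^sup>n\<close>, expanding the right-hand side by the binomial theorem
  in the two summands \<open>(1 + x)\<^sup>2\<close> and \<open>-x\<^sup>2\<close>. For \<open>n = m + r\<close> all binomial coefficients
  in the claim have nonnegative upper index, so the generalized binomial coefficients
  are ordinary ones.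
\<close>

lemma coeff_linear_poly_power':
  fixes a b :: "'a :: comm_semiring_1"
  shows "coeff ([:a, b:] ^ n) i = of_nat (n choose i) * b ^ i * a ^ (n - i)"
proof (cases "i \<le> n")
  case True
  then show ?thesis by (rule coeff_linear_poly_power)
next
  case False
  have "degree ([:a, b:] ^ n) \<le> n"
    by (rule order.trans[OF degree_power_le]) (simp add: degree_pCons_le)
  with False show ?thesis by (simp add: coeff_eq_0 binomial_eq_0)
qed

lemma two_power_mult_binomial_eq_sum:
  "(2 :: 'a :: comm_ring_1) ^ r * of_nat (n choose r) =
    (\<Sum>i = 0..r div 2. (-1) ^ i * of_nat ((2*n - 2*i) choose (r - 2*i)) * of_nat (n choose i))"
proof -
  define t :: "nat \<Rightarrow> 'a" where
    "t i = (-1) ^ i * of_nat ((2*n - 2*i) choose (r - 2*i)) * of_nat (n choose i)" for i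
  have t_vanishes: "t i = 0" if "n < i" for i
    using that by (simp add: t_def binomial_eq_0)
  have split: "[:1, 2:] = monom (-1 :: 'a) 2 + [:1, 1:] ^ 2"
    by (simp add: monom_altdef power2_eq_square)
  have coeff_summand:
    "coeff (of_nat (n choose i) * monom (-1) 2 ^ i * ([:1, 1:] ^ 2) ^ (n - i)) r =
       (if 2 * i \<le> r then t i else 0)" for i
    by (simp add: t_def monom_power mult.assoc coeff_monom_mult power_mult[symmetric]
        coeff_linear_poly_power' of_nat_mult_conv_smult diff_mult_distrib mult_ac)
  have "2 ^ r * of_nat (n choose r) = coeff ([:1, 2 :: 'a:] ^ n) r"
    by (simp add: coeff_linear_poly_power')
  also have "\<dots> = (\<Sum>i\<le>n. if 2 * i \<le> r then t i else 0)"
    by (simp only: split binomial_ring coeff_sum coeff_summand)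
  also have "\<dots> = (\<Sum>i\<in>{i\<in>{..n}. 2 * i \<le> r}. t i)"
    by (simp add: sum.inter_filter[symmetric])
  also have "\<dots> = (\<Sum>i = 0..r div 2. t i)"
    by (rule sum.mono_neutral_left) (auto, metis t_vanishes not_le)
  finally show ?thesis
    by (simp add: t_def)
qed

theorem lemma19:
  fixes r :: nat and m :: int
  assumes "2 * m + int r \<ge> 0"
  shows "(2::real) ^ r * (of_int (m + int r) gchoose r) =
    (\<Sum>i = 0..r div 2. (-1) ^ i * (of_int (2 * m + 2 * int r - 2 * int i) gchoose (r - 2 * i))
                          * (of_int (m + int r) gchoose i))"
proof -
  define n where "n = nat (m + int r)"
  have n: "m + int r = int n"
    unfolding n_def using assms by simp
  have "(2::real) ^ r * (of_int (m + int r) gchoose r) = 2 ^ r * of_nat (n choose r)"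
    by (simp add: n binomial_gbinomial)
  also have "\<dots> = (\<Sum>i = 0..r div 2. (-1) ^ i * of_nat ((2*n - 2*i) choose (r - 2*i)) * of_nat (n choose i))"
    by (rule two_power_mult_binomial_eq_sum)
  also have "\<dots> = (\<Sum>i = 0..r div 2. (-1) ^ i * (of_int (2 * m + 2 * int r - 2 * int i) gchoose (r - 2 * i))
                          * (of_int (m + int r) gchoose i))"
  proof (rule sum.cong)
    fix i assume "i \<in> {0..r div 2}"
    then have "2 * m + 2 * int r - 2 * int i = int (2*n - 2*i)"
      using assms n by auto
    then show "(-1) ^ i * of_nat ((2*n - 2*i) choose (r - 2*i)) * of_nat (n choose i) =
        (-1) ^ i * (of_int (2 * m + 2 * int r - 2 * int i) gchoose (r - 2 * i))
          * (of_int (m + int r) gchoose i :: real)"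
      by (simp add: n binomial_gbinomial)
  qed simp
  finally show ?thesis .
qed

end
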